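(* Let $\gamma$ be a POS for which there is a constant $c>0$ such that for every cylinder set $A$ there exists a time box $\Lambda$ with $A\in\mathcal F_{S\setminus\Lambda_+}$ and $\gamma_\Lambda(A,\omega)\ge c\,\gamma_\Lambda(A,\xi)$ for all $\omega,\xi\in\Omega$. Then $|\mathcal G(\gamma)|\le1$.
   Context: $(S,\le)$ is a countable partially ordered set. For $x\in S$ write $x_-=\{y\in S:y<x\}$, $x_+=\{y\in S:y>x\}$. For $\Upsilon\subset S$: $\max(\Upsilon)=\{x\in\Upsilon: y\notin\Upsilon\text{ for all }y>x\}$, $\min(\Upsilon)=\{x\in\Upsilon: y\notin\Upsilon\text{ for all }y<x\}$, the past $\Upsilon_-=\{x\in S\setminus\Upsilon:\exists y\in\Upsilon,\ x<y\}$, the future $\Upsilon_+=\{x\in S\setminus\Upsilon:\exists y\in\Upsilon,\ x>y\}$, and the outer time $\Upsilon^*=\{x\in S: x\text{ is comparable with no }y\in\Upsilon\}$. Standing assumptions: for every $x\in S$, $\max(x_-)$ and $\min(x_+)$ are finite, every $y<x$ satisfies $y\le y_0<x$ for some $y_0\in\max(x_-)$, every $z>x$ satisfies $z\ge z_0>x$ for some $z_0\in\min(x_+)$; and $S$ has no minimal element. A finite set $\Lambda\subset S$ is a time box if $\Lambda_-\cap\Lambda_+=\emptyset$. $(E,\mathcal E)$ is a measurable space, $\Omega=E^S$ with product $\sigma$-algebra $\mathcal F$; $\mathcal F_\Upsilon$ is generated by coordinates in $\Upsilon$; a cylinder set is an element of $\mathcal F_\Delta$ for some finite $\Delta$. A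 proper oriented kernel on a time box $\Lambda$ is a map $\gamma_\Lambda:\mathcal F_{S\setminus\Lambda_+}\times\Omega\to[0,1]$ such that (a) $\gamma_\Lambda(\cdot,\omega)$ is a probability measure; (b) $\gamma_\Lambda(A,\cdot)$ is $\mathcal F_{\Lambda_-\cup\Lambda^*}$-measurable for $A\in\mathcal F_{S\setminus\Lambda_+}$; (c) $\gamma_\Lambda(A,\cdot)$ is $\mathcal F_{\Lambda_-}$-measurable for $A\in\mathcal F_\Lambda$; (d) $\gamma_\Lambda(B,\omega)=\mathbf 1_B(\omega)$ for $B\in\mathcal F_{\Lambda_-\cup\Lambda^*}$. Compositions $(\gamma_\Delta\gamma_\Lambda)(f\mid\omega)=\int\gamma_\Lambda(f\mid\sigma)\gamma_\Delta(d\sigma,\omega)$, $(\mu\gamma_\Lambda)(f)=\int\gamma_\Lambda(f\mid\sigma)\mu(d\sigma)$ with $\gamma_\Lambda(f\mid\omega)=\int f\,d\gamma_\Lambda(\cdot,\omega)$. A POS is a family $\gamma=(\gamma_\Lambda)$ of proper oriented kernels indexed by all time boxes with $\gamma_\Delta\gamma_\Lambda=\gamma_\Delta$ on $\mathcal F_{S\setminus\Lambda_+}$ whenever $\Lambda\subset\Delta$. $\mathcal G(\gamma)$ is the set of probability measures $\mu$ with $\mu\gamma_\Lambda=\mu$ on $\mathcal F_{S\setminus\Lambda_+}$ for all time boxes $\Lambda$. *)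

theory Defs
  imports "HOL-Probability.Probability"
begin

definition past_set :: "'s::order set \<Rightarrow> 's set" where
  "past_set U = {x. x \<notin> U \<and> (\<exists>y\<in>U. x < y)}"

definition future_set :: "'s::order set \<Rightarrow> 's set" where
  "future_set U = {x. x \<notin> U \<and> (\<exists>y\<in>U. y < x)}"

definition outer_set :: "'s::order set \<Rightarrow> 's set" where
  "outer_set U = {x. \<forall>y\<in>U. \<not> (x \<le> y \<or> y \<le> x)}"

definition max_set :: "'s::order set \<Rightarrow> 's set" where
  "max_set U = {x\<in>U. \<forall>y. x < y \<longrightarrow> y \<notin> U}"

definition min_set :: "'s::order set \<Rightarrow> 's set" where
  "min_set U = {x\<in>U. \<forall>y. y < x \<longrightarrow> y \<notin> U}"

text \<open>Standing assumptions on the countable poset S (here the whole type 's).\<close>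
definition standing_assumptions :: "'s::order itself \<Rightarrow> bool" where
  "standing_assumptions _ \<longleftrightarrow>
     countable (UNIV :: 's set) \<and>
     (\<forall>x::'s. finite (max_set {y. y < x}) \<and> finite (min_set {z. x < z}) \<and>
        (\<forall>y. y < x \<longrightarrow> (\<exists>y0\<in>max_set {y. y < x}. y \<le> y0)) \<and>
        (\<forall>z. x < z \<longrightarrow> (\<exists>z0\<in>min_set {z. x < z}. z0 \<le> z))) \<and>
     (\<forall>x::'s. \<exists>y. y < x)"

definition time_box :: "'s::order set \<Rightarrow> bool" where
  "time_box L \<longleftrightarrow> finite L \<and> past_set L \<inter> future_set L = {}"

abbreviation cfg :: "'e measure \<Rightarrow> ('s \<Rightarrow> 'e) measure" where
  "cfg M \<equiv> PiM UNIV (\<lambda>_. M)"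

abbreviation Omega :: "'e measure \<Rightarrow> ('s \<Rightarrow> 'e) set" where
  "Omega M \<equiv> space (cfg M)"

definition Fsig :: "'e measure \<Rightarrow> 's set \<Rightarrow> ('s \<Rightarrow> 'e) set set" where
  "Fsig M U = sigma_sets (Omega M)
     (\<Union>i\<in>U. {(\<lambda>\<omega>. \<omega> i) -` B \<inter> Omega M | B. B \<in> sets M})"

definition cylinder :: "'e measure \<Rightarrow> ('s \<Rightarrow> 'e) set \<Rightarrow> bool" where
  "cylinder M A \<longleftrightarrow> (\<exists>D. finite D \<and> A \<in> Fsig M D)"

text \<open>A kernel on L assigns to each configuration a probability measure on
  Omega with sigma-algebra F_{S - L_+}; gamma_L(A, w) = measure (k w) A.\<close>
definition proper_oriented_kernel ::
  "'e measure \<Rightarrow> 's::order set \<Rightarrow> (('s \<Rightarrow> 'e) \<Rightarrow> ('s \<Rightarrow> 'e) measure) \<Rightarrow> bool" where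
  "proper_oriented_kernel M L k \<longleftrightarrow>
     (\<forall>\<omega>\<in>Omega M. prob_space (k \<omega>) \<and> space (k \<omega>) = Omega M \<and>
                   sets (k \<omega>) = Fsig M (UNIV - future_set L)) \<and>
     (\<forall>A\<in>Fsig M (UNIV - future_set L).
        (\<lambda>\<omega>. measure (k \<omega>) A) \<in> borel_measurable
             (sigma (Omega M) (Fsig M (past_set L \<union> outer_set L)))) \<and>
     (\<forall>A\<in>Fsig M L.
        (\<lambda>\<omega>. measure (k \<omega>) A) \<in> borel_measurable (sigma (Omega M) (Fsig M (past_set L)))) \<and>
     (\<forall>B\<in>Fsig M (past_set L \<union> outer_set L). \<forall>\<omega>\<in>Omega M.
        measure (k \<omega>) B = indicator B \<omega>)"

text \<open>Consistency gamma_D gamma_L = gamma_D for L \<subseteq> D, required for the events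
  on which both sides are defined.\<close>
definition POS ::
  "'e measure \<Rightarrow> ('s::order set \<Rightarrow> ('s \<Rightarrow> 'e) \<Rightarrow> ('s \<Rightarrow> 'e) measure) \<Rightarrow> bool" where
  "POS M \<gamma> \<longleftrightarrow>
     (\<forall>L. time_box L \<longrightarrow> proper_oriented_kernel M L (\<gamma> L)) \<and>
     (\<forall>L D. time_box L \<longrightarrow> time_box D \<longrightarrow> L \<subseteq> D \<longrightarrow>
        (\<forall>A\<in>Fsig M (UNIV - future_set L) \<inter> Fsig M (UNIV - future_set D).
          \<forall>\<omega>\<in>Omega M.
            (\<lambda>\<sigma>. measure (\<gamma> L \<sigma>) A) \<in> borel_measurable (\<gamma> D \<omega>) \<longrightarrow>
            (\<integral>\<sigma>. measure (\<gamma> L \<sigma>) A \<partial>(\<gamma> D \<omega>)) = measure (\<gamma> D \<omega>) A))"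

definition Gibbs ::
  "'e measure \<Rightarrow> ('s::order set \<Rightarrow> ('s \<Rightarrow> 'e) \<Rightarrow> ('s \<Rightarrow> 'e) measure) \<Rightarrow> ('s \<Rightarrow> 'e) measure set" where
  "Gibbs M \<gamma> = {\<mu>. prob_space \<mu> \<and> sets \<mu> = sets (cfg M) \<and>
     (\<forall>L. time_box L \<longrightarrow> (\<forall>A\<in>Fsig M (UNIV - future_set L).
        (\<integral>\<sigma>. measure (\<gamma> L \<sigma>) A \<partial>\<mu>) = measure \<mu> A))}"

end

theory Submission
  imports Defs
begin

text \<open>Idea (a Doeblin-type coupling argument).  Let mu, nu be measures specified by gamma and
  c \<in> (0,1) a lower-bound constant.  For a cylinder event A with its time box L, the lower
  bound gives c * gamma_L(A, xi) \<le> gamma_L(A, omega) for all configurations; integrating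
  in omega against mu and then in xi against nu yields c * nu(A) \<le> mu(A).  Cylinders form
  an algebra generating the product sigma-algebra, so by Caratheodory's extension theorem
  and Dynkin's pi-lambda theorem mu = c*nu + rho for a finite measure rho.  Since the
  specification identities are linear in the measure, mu' = rho / (1 - c) is again
  specified by gamma, and mu - nu = (1 - c)(mu' - nu).  Iterating, every event satisfies
  |mu(A) - nu(A)| \<le> (1 - c)^n for all n, hence mu = nu.\<close>

lemma Fsig_subset_sets: "Fsig M U \<subseteq> sets (cfg M)"
  unfolding Fsig_def
proof (rule sets.sigma_sets_subset, safe)
  fix i B assume "B \<in> sets M"
  moreover have "(\<lambda>\<omega>. \<omega> i) \<in> measurable (cfg M) M"
    by (rule measurable_component_singleton) simp
  ultimately show "(\<lambda>\<omega>. \<omega> i) -` B \<inter> Omega M \<in> sets (cfg M)"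
    using measurable_sets by blast
qed

lemma Fsig_mono: "U \<subseteq> V \<Longrightarrow> Fsig M U \<subseteq> Fsig M V"
  unfolding Fsig_def by (rule sigma_sets_mono') blast

lemma cylinder_sets: "cylinder M A \<Longrightarrow> A \<in> sets (cfg M)"
  unfolding cylinder_def using Fsig_subset_sets by blast

lemma cylinder_common_base:
  assumes "cylinder M A" "cylinder M B"
  obtains D where "finite D" "A \<in> Fsig M D" "B \<in> Fsig M D"
proof -
  obtain D1 D2 where "finite D1" "A \<in> Fsig M D1" "finite D2" "B \<in> Fsig M D2"
    using assms unfolding cylinder_def by blast
  then show thesis
    using that[of "D1 \<union> D2"] Fsig_mono[of D1 "D1 \<union> D2" M] Fsig_mono[of D2 "D1 \<union> D2" M] by auto
qed

lemma algebra_Fsig: "algebra (Omega M) (Fsig M U)"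
proof -
  have "sigma_algebra (Omega M) (Fsig M U)"
    unfolding Fsig_def by (rule sigma_algebra_sigma_sets) auto
  then show ?thesis
    by (simp add: sigma_algebra_def)
qed

lemma cylinder_algebra: "algebra (Omega M) {A :: ('s \<Rightarrow> 'e) set. cylinder M A}"
  unfolding algebra_iff_Un
proof safe
  show "cylinder M A \<Longrightarrow> x \<in> A \<Longrightarrow> x \<in> Omega M" for A x
    using cylinder_sets sets.sets_into_space by blast
  show "cylinder M {}"
    unfolding cylinder_def Fsig_def using sigma_sets.Empty by blast
next
  fix A assume "cylinder M A"
  then show "cylinder M (Omega M - A)"
    unfolding cylinder_def using algebra.compl_sets[OF algebra_Fsig] by blast
next
  fix A B :: "('s \<Rightarrow> 'e) set" assume "cylinder M A" "cylinder M B"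
  then obtain D where "finite D" "A \<in> Fsig M D" "B \<in> Fsig M D"
    by (rule cylinder_common_base)
  then show "cylinder M (A \<union> B)"
    unfolding cylinder_def using ring_of_sets.Un[OF algebra.axioms(1)[OF algebra_Fsig]] by blast
qed

text \<open>Cylinder events generate the product sigma-algebra: every coordinate event
  {\<omega>. \<omega> i \<in> B} is a cylinder.\<close>
lemma sigma_sets_cylinders:
  "sigma_sets (Omega M) {A :: ('s \<Rightarrow> 'e) set. cylinder M A} = sets (cfg M)"
proof
  show "sigma_sets (Omega M) {A. cylinder M A} \<subseteq> sets (cfg M)"
    by (rule sets.sigma_sets_subset) (auto intro: cylinder_sets)
  have "sets (cfg M) = sigma_sets (Omega M) {{f\<in>Omega M. f i \<in> B} | i B. B \<in> sets M}"
    by (simp add: sets_PiM_single space_PiM)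
  also have "\<dots> \<subseteq> sigma_sets (Omega M) {A. cylinder M A}"
  proof (rule sigma_sets_mono', safe)
    fix i B assume "B \<in> sets M"
    then have "(\<lambda>\<omega>. \<omega> i) -` B \<inter> Omega M \<in> Fsig M {i}"
      unfolding Fsig_def by (intro sigma_sets.Basic) blast
    moreover have "(\<lambda>\<omega>. \<omega> i) -` B \<inter> Omega M = {f\<in>Omega M. f i \<in> B}" by auto
    ultimately show "cylinder M {f\<in>Omega M. f i \<in> B}"
      unfolding cylinder_def by (metis finite.emptyI finite_insert)
  qed
  finally show "sets (cfg M) \<subseteq> sigma_sets (Omega M) {A. cylinder M A}" .
qed

lemma countably_additive_difference:
  assumes fin: "finite_measure \<mu>" "finite_measure \<nu>"
    and G: "G \<subseteq> sets \<mu>" "G \<subseteq> sets \<nu>"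
    and dom: "\<And>C. C \<in> G \<Longrightarrow> c * measure \<nu> C \<le> measure \<mu> C"
  shows "countably_additive G (\<lambda>C. ennreal (measure \<mu> C - c * measure \<nu> C))"
  unfolding countably_additive_def
proof (intro allI impI)
  fix A :: "nat \<Rightarrow> _"
  assume A: "range A \<subseteq> G" "disjoint_family A" "\<Union> (range A) \<in> G"
  have "(\<lambda>i. measure \<mu> (A i)) sums measure \<mu> (\<Union>i. A i)"
    using A G by (intro finite_measure.finite_measure_UNION[OF fin(1)]) auto
  moreover have "(\<lambda>i. measure \<nu> (A i)) sums measure \<nu> (\<Union>i. A i)"
    using A G by (intro finite_measure.finite_measure_UNION[OF fin(2)]) auto
  ultimately have "(\<lambda>i. measure \<mu> (A i) - c * measure \<nu> (A i))
      sums (measure \<mu> (\<Union>i. A i) - c * measure \<nu> (\<Union>i. A i))"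
    by (intro sums_diff sums_mult)
  then show "(\<Sum>i. ennreal (measure \<mu> (A i) - c * measure \<nu> (A i))) =
      ennreal (measure \<mu> (\<Union> (range A)) - c * measure \<nu> (\<Union> (range A)))"
    using A(1) dom by (intro suminf_ennreal_eq) auto
qed

text \<open>The residual rho is the Caratheodory extension of mu - c*nu from G, and
  the identity propagates from G to sigma(G) by Dynkin's pi-lambda argument.\<close>
lemma dominated_decomposition:
  assumes G: "algebra \<Omega> G"
    and sets_\<mu>: "sets \<mu> = sigma_sets \<Omega> G" and sets_\<nu>: "sets \<nu> = sigma_sets \<Omega> G"
    and fin: "finite_measure \<mu>" "finite_measure \<nu>"
    and dom: "\<And>C. C \<in> G \<Longrightarrow> c * measure \<nu> C \<le> measure \<mu> C"
  obtains \<rho> where "finite_measure \<rho>" "sets \<rho> = sigma_sets \<Omega> G"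
    "\<And>A. A \<in> sigma_sets \<Omega> G \<Longrightarrow> measure \<mu> A = c * measure \<nu> A + measure \<rho> A"
proof -
  interpret G: algebra \<Omega> G by (rule G)
  define f where "f C = ennreal (measure \<mu> C - c * measure \<nu> C)" for C
  have "countably_additive G f"
    unfolding f_def using sets_\<mu> sets_\<nu> by (intro countably_additive_difference fin dom) auto
  moreover have "positive G f"
    unfolding positive_def f_def by simp
  ultimately obtain \<rho>' where ext: "\<And>C. C \<in> G \<Longrightarrow> \<rho>' C = f C"
    and ms: "measure_space \<Omega> (sigma_sets \<Omega> G) \<rho>'"
    using G.caratheodory' by blast
  define \<rho> where "\<rho> = measure_of \<Omega> (sigma_sets \<Omega> G) \<rho>'"
  have sets_\<rho>: "sets \<rho> = sigma_sets \<Omega> G"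
    unfolding \<rho>_def
    by (rule sigma_algebra.sets_measure_of_eq[OF sigma_algebra_sigma_sets[OF G.space_closed]])
  have space_\<rho>: "space \<rho> = \<Omega>"
    unfolding \<rho>_def by (simp add: space_measure_of_conv)
  have emeasure_\<rho>: "emeasure \<rho> A = \<rho>' A" if "A \<in> sigma_sets \<Omega> G" for A
    unfolding \<rho>_def using ms that by (intro emeasure_measure_of_sigma) (auto simp: measure_space_def)
  have fin_\<rho>: "finite_measure \<rho>"
    using emeasure_\<rho>[of \<Omega>] ext[of \<Omega>] G.top by (intro finite_measureI) (simp add: space_\<rho> f_def)
  have space_\<mu>: "space \<mu> = \<Omega>" and space_\<nu>: "space \<nu> = \<Omega>"
    using sets_eq_imp_space_eq sets_\<mu> sets_\<nu> sets_\<rho> space_\<rho> by metis+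
  have "measure \<mu> A = c * measure \<nu> A + measure \<rho> A" if "A \<in> sigma_sets \<Omega> G" for A
    using G.Int_stable G.space_closed that
  proof (induct rule: sigma_sets_induct_disjoint)
    case (basic C)
    then show ?case
      using emeasure_\<rho>[of C] ext[of C] dom[of C] by (simp add: measure_def f_def)
  next
    case empty
    then show ?case by simp
  next
    case (compl A)
    have "measure \<mu> \<Omega> = c * measure \<nu> \<Omega> + measure \<rho> \<Omega>"
      using emeasure_\<rho>[of \<Omega>] ext[of \<Omega>] dom[of \<Omega>] G.top by (simp add: measure_def f_def)
    moreover have "measure m (\<Omega> - A) = measure m \<Omega> - measure m A"
      if "finite_measure m" "sets m = sigma_sets \<Omega> G" "space m = \<Omega>" for m
      using finite_measure.finite_measure_compl[OF that(1), of A] compl(1) that(2,3) by simp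
    ultimately show ?case
      using compl(2) fin fin_\<rho> sets_\<mu> sets_\<nu> sets_\<rho> space_\<mu> space_\<nu> space_\<rho>
      by (simp add: right_diff_distrib)
  next
    case (union A)
    have "(\<lambda>i. measure \<mu> (A i)) sums measure \<mu> (\<Union>i. A i)"
      using union sets_\<mu> by (intro finite_measure.finite_measure_UNION[OF fin(1)]) auto
    moreover have "(\<lambda>i. c * measure \<nu> (A i) + measure \<rho> (A i))
        sums (c * measure \<nu> (\<Union>i. A i) + measure \<rho> (\<Union>i. A i))"
      using union sets_\<nu> sets_\<rho>
      by (intro sums_add sums_mult finite_measure.finite_measure_UNION[OF fin(2)]
          finite_measure.finite_measure_UNION[OF fin_\<rho>]) auto
    ultimately show ?case
      using union(3) sums_unique2 by simp
  qed
  then show thesis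
    using that fin_\<rho> sets_\<rho> by blast
qed

lemma nn_integral_mixture:
  assumes sets_N1: "sets N1 = sets M" and sets_N2: "sets N2 = sets M"
    and eq: "\<And>A. A \<in> sets M \<Longrightarrow> emeasure M A = a * emeasure N1 A + b * emeasure N2 A"
    and f: "f \<in> borel_measurable M"
  shows "(\<integral>\<^sup>+x. f x \<partial>M) = a * (\<integral>\<^sup>+x. f x \<partial>N1) + b * (\<integral>\<^sup>+x. f x \<partial>N2)"
proof -
  have space_N: "space N1 = space M" "space N2 = space M"
    using sets_N1 sets_N2 sets_eq_imp_space_eq by blast+
  have measurable_N: "g \<in> borel_measurable N1" "g \<in> borel_measurable N2"
    if "g \<in> borel_measurable M" for g :: "_ \<Rightarrow> ennreal"
    using that measurable_cong_sets[OF sets_N1 refl] measurable_cong_sets[OF sets_N2 refl] by blast+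
  from f show ?thesis
  proof (induct rule: borel_measurable_induct)
    case (cong f g)
    have "integral\<^sup>N N f = integral\<^sup>N N g" if "space N = space M" for N
      using cong(3) that by (intro nn_integral_cong) auto
    then show ?case
      using cong(4) space_N by simp
  next
    case (set A)
    then show ?case
      using sets_N1 sets_N2 eq by simp
  next
    case (mult u c)
    then show ?case
      using nn_integral_cmult[OF measurable_N(1)] nn_integral_cmult[OF measurable_N(2)]
        nn_integral_cmult[OF mult(2)]
      by (simp add: algebra_simps)
  next
    case (add u v)
    then show ?case
      using nn_integral_add[OF measurable_N(1) measurable_N(1)]
        nn_integral_add[OF measurable_N(2) measurable_N(2)] nn_integral_add[OF add(4) add(1)]
      by (simp add: algebra_simps)
  next
    case (seq U)
    have incseq_N: "incseq (\<lambda>i. k * integral\<^sup>N N (U i))" for k N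
      using seq(4) unfolding incseq_def le_fun_def by (auto intro!: mult_left_mono nn_integral_mono)
    have monotone_convergence: "integral\<^sup>N N (SUP i. U i) = (SUP i. integral\<^sup>N N (U i))"
      if "\<And>i. U i \<in> borel_measurable N" for N
      unfolding SUP_apply using seq(4) that by (intro nn_integral_monotone_convergence_SUP) auto
    have "integral\<^sup>N M (SUP i. U i) = (SUP i. integral\<^sup>N M (U i))"
      using monotone_convergence seq(1) by blast
    also have "\<dots> = (SUP i. a * integral\<^sup>N N1 (U i) + b * integral\<^sup>N N2 (U i))"
      using seq(3) by simp
    also have "\<dots> = (SUP i. a * integral\<^sup>N N1 (U i)) + (SUP i. b * integral\<^sup>N N2 (U i))"
      using incseq_N incseq_N by (rule ennreal_SUP_add)
    also have "\<dots> = a * (SUP i. integral\<^sup>N N1 (U i)) + b * (SUP i. integral\<^sup>N N2 (U i))"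
      by (simp add: SUP_mult_left_ennreal)
    also have "(SUP i. integral\<^sup>N N1 (U i)) = integral\<^sup>N N1 (SUP i. U i)"
      using monotone_convergence measurable_N(1) seq(1) by metis
    also have "(SUP i. integral\<^sup>N N2 (U i)) = integral\<^sup>N N2 (SUP i. U i)"
      using monotone_convergence measurable_N(2) seq(1) by metis
    finally show ?case .
  qed
qed

lemma integral_mixture:
  assumes sets_N1: "sets N1 = sets M" and sets_N2: "sets N2 = sets M"
    and fin: "finite_measure M" "finite_measure N1" "finite_measure N2"
    and a: "0 \<le> a" and b: "0 \<le> b"
    and eq: "\<And>A. A \<in> sets M \<Longrightarrow> measure M A = a * measure N1 A + b * measure N2 A"
    and int: "integrable M f" "integrable N1 f" "integrable N2 f"
    and nonneg: "\<And>x. x \<in> space M \<Longrightarrow> 0 \<le> f x"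
  shows "(\<integral>x. f x \<partial>M) = a * (\<integral>x. f x \<partial>N1) + b * (\<integral>x. f x \<partial>N2)"
proof -
  have space_N: "space N1 = space M" "space N2 = space M"
    using sets_N1 sets_N2 sets_eq_imp_space_eq by blast+
  have nonneg_integral: "0 \<le> (\<integral>x. f x \<partial>N)" if "space N = space M" for N
    using nonneg that by (intro integral_nonneg_AE AE_I2) auto
  have ennreal_integral: "(\<integral>\<^sup>+x. ennreal (f x) \<partial>N) = ennreal (\<integral>x. f x \<partial>N)"
    if "integrable N f" "space N = space M" for N
    using that nonneg by (intro nn_integral_eq_integral AE_I2) auto
  have "emeasure M A = ennreal a * emeasure N1 A + ennreal b * emeasure N2 A"
    if A: "A \<in> sets M" for A
  proof -
    have "emeasure M A = ennreal (a * measure N1 A + b * measure N2 A)"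
      using eq[OF A] finite_measure.emeasure_eq_measure[OF fin(1)] by simp
    also have "\<dots> = ennreal a * ennreal (measure N1 A) + ennreal b * ennreal (measure N2 A)"
      using a b by (simp add: ennreal_plus ennreal_mult)
    finally show ?thesis
      by (simp add: finite_measure.emeasure_eq_measure[OF fin(2)]
          finite_measure.emeasure_eq_measure[OF fin(3)])
  qed
  then have "(\<integral>\<^sup>+x. ennreal (f x) \<partial>M) =
      ennreal a * (\<integral>\<^sup>+x. ennreal (f x) \<partial>N1) + ennreal b * (\<integral>\<^sup>+x. ennreal (f x) \<partial>N2)"
    using sets_N1 sets_N2 int(1) by (intro nn_integral_mixture) auto
  then have "ennreal (\<integral>x. f x \<partial>M) =
      ennreal a * ennreal (\<integral>x. f x \<partial>N1) + ennreal b * ennreal (\<integral>x. f x \<partial>N2)"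
    using int space_N by (simp only: ennreal_integral)
  also have "\<dots> = ennreal (a * (\<integral>x. f x \<partial>N1) + b * (\<integral>x. f x \<partial>N2))"
    using a b nonneg_integral space_N by (simp add: ennreal_plus ennreal_mult)
  finally show ?thesis
    using a b nonneg_integral space_N by (subst (asm) ennreal_inj) auto
qed

lemma GibbsD:
  assumes "\<mu> \<in> Gibbs M \<gamma>"
  shows "prob_space \<mu>" "sets \<mu> = sets (cfg M)" "space \<mu> = Omega M"
    and "\<And>L A. time_box L \<Longrightarrow> A \<in> Fsig M (UNIV - future_set L) \<Longrightarrow>
           (\<integral>\<sigma>. measure (\<gamma> L \<sigma>) A \<partial>\<mu>) = measure \<mu> A"
  using assms sets_eq_imp_space_eq[of \<mu> "cfg M"] unfolding Gibbs_def by auto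

lemma kernel_measurable:
  assumes P: "POS M \<gamma>" and L: "time_box L" and A: "A \<in> Fsig M (UNIV - future_set L)"
  shows "(\<lambda>\<sigma>. measure (\<gamma> L \<sigma>) A) \<in> borel_measurable (cfg M)"
proof -
  have k: "proper_oriented_kernel M L (\<gamma> L)" using P L unfolding POS_def by blast
  let ?F = "Fsig M (past_set L \<union> outer_set L)"
  have m: "(\<lambda>\<sigma>. measure (\<gamma> L \<sigma>) A) \<in> borel_measurable (sigma (Omega M) ?F)"
    using k A unfolding proper_oriented_kernel_def by blast
  have FP: "?F \<subseteq> Pow (Omega M)" using Fsig_subset_sets sets.sets_into_space by blast
  have "measurable (sigma (Omega M) ?F) borel \<subseteq> measurable (cfg M) borel"
  proof (rule measurable_mono)
    show "sets (sigma (Omega M) ?F) \<subseteq> sets (cfg M)"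
      using FP sets_measure_of[OF FP] sets.sigma_sets_subset[OF Fsig_subset_sets] by simp
    show "space (sigma (Omega M) ?F) = space (cfg M)" by (simp add: space_measure_of_conv)
  qed auto
  then show ?thesis using m by blast
qed

lemma kernel_bounds:
  assumes P: "POS M \<gamma>" and L: "time_box L" and \<omega>: "\<omega> \<in> Omega M"
  shows "0 \<le> measure (\<gamma> L \<omega>) A" "measure (\<gamma> L \<omega>) A \<le> 1"
proof -
  have "proper_oriented_kernel M L (\<gamma> L)"
    using P L unfolding POS_def by blast
  then have "prob_space (\<gamma> L \<omega>)"
    using \<omega> unfolding proper_oriented_kernel_def by blast
  then show "0 \<le> measure (\<gamma> L \<omega>) A" "measure (\<gamma> L \<omega>) A \<le> 1"
    by (simp_all add: prob_space.prob_le_1)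
qed

lemma kernel_integrable:
  assumes P: "POS M \<gamma>" and L: "time_box L" and A: "A \<in> Fsig M (UNIV - future_set L)"
    and \<mu>: "finite_measure \<mu>" "sets \<mu> = sets (cfg M)"
  shows "integrable \<mu> (\<lambda>\<sigma>. measure (\<gamma> L \<sigma>) A)"
proof -
  have "space \<mu> = Omega M"
    using \<mu>(2) sets_eq_imp_space_eq by blast
  moreover have "(\<lambda>\<sigma>. measure (\<gamma> L \<sigma>) A) \<in> borel_measurable \<mu>"
    using kernel_measurable[OF P L A] measurable_cong_sets[OF \<mu>(2) refl] by blast
  ultimately show ?thesis
    using kernel_bounds[OF P L]
    by (intro finite_measure.integrable_const_bound[OF \<mu>(1), where B=1] AE_I2) auto
qed

definition cylinder_lower_bound ::
  "'e measure \<Rightarrow> ('s::order set \<Rightarrow> ('s \<Rightarrow> 'e) \<Rightarrow> ('s \<Rightarrow> 'e) measure) \<Rightarrow> real \<Rightarrow> bool" where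
  "cylinder_lower_bound M \<gamma> c \<longleftrightarrow>
     (\<forall>A. cylinder M A \<longrightarrow>
        (\<exists>L. time_box L \<and> A \<in> Fsig M (UNIV - future_set L) \<and>
           (\<forall>\<omega>\<in>Omega M. \<forall>\<xi>\<in>Omega M. measure (\<gamma> L \<omega>) A \<ge> c * measure (\<gamma> L \<xi>) A)))"

text \<open>A smaller constant is still a lower bound; used to assume c < 1.\<close>
lemma cylinder_lower_bound_mono:
  fixes \<gamma> :: "'s::order set \<Rightarrow> ('s \<Rightarrow> 'e) \<Rightarrow> ('s \<Rightarrow> 'e) measure"
  assumes "cylinder_lower_bound M \<gamma> c" "c' \<le> c"
  shows "cylinder_lower_bound M \<gamma> c'"
proof -
  have weaker: "c' * measure N A \<le> c * measure N A" for N :: "('s \<Rightarrow> 'e) measure" and A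
    using assms(2) by (intro mult_right_mono) auto
  show ?thesis
    unfolding cylinder_lower_bound_def
  proof (intro allI impI)
    fix A :: "('s \<Rightarrow> 'e) set" assume "cylinder M A"
    then obtain L where "time_box L" "A \<in> Fsig M (UNIV - future_set L)"
      "\<forall>\<omega>\<in>Omega M. \<forall>\<xi>\<in>Omega M. measure (\<gamma> L \<omega>) A \<ge> c * measure (\<gamma> L \<xi>) A"
      using assms(1) unfolding cylinder_lower_bound_def by blast
    then show "\<exists>L. time_box L \<and> A \<in> Fsig M (UNIV - future_set L) \<and>
        (\<forall>\<omega>\<in>Omega M. \<forall>\<xi>\<in>Omega M. measure (\<gamma> L \<omega>) A \<ge> c' * measure (\<gamma> L \<xi>) A)"
      using weaker order_trans by blast
  qed
qed

text \<open>Domination for a single event: if gamma_L(A, \<cdot>) varies at most by the factor c,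
  then c*nu(A) \<le> mu(A) for any two specified measures (integrate the pointwise bound
  first against mu, then against nu).\<close>
lemma gibbs_event_domination:
  assumes P: "POS M \<gamma>" and \<mu>: "\<mu> \<in> Gibbs M \<gamma>" and \<nu>: "\<nu> \<in> Gibbs M \<gamma>"
    and L: "time_box L" and A: "A \<in> Fsig M (UNIV - future_set L)"
    and lower: "\<And>\<omega> \<xi>. \<omega> \<in> Omega M \<Longrightarrow> \<xi> \<in> Omega M \<Longrightarrow>
                  c * measure (\<gamma> L \<xi>) A \<le> measure (\<gamma> L \<omega>) A"
  shows "c * measure \<nu> A \<le> measure \<mu> A"
proof -
  interpret \<mu>: prob_space \<mu> using GibbsD(1)[OF \<mu>] .
  interpret \<nu>: prob_space \<nu> using GibbsD(1)[OF \<nu>] .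
  let ?f = "\<lambda>\<sigma>. measure (\<gamma> L \<sigma>) A"
  have int_\<mu>: "integrable \<mu> ?f" and int_\<nu>: "integrable \<nu> ?f"
    using GibbsD(2)[OF \<mu>] GibbsD(2)[OF \<nu>]
    by (auto intro!: kernel_integrable[OF P L A] \<mu>.finite_measure_axioms \<nu>.finite_measure_axioms)
  have below_\<mu>: "c * ?f \<xi> \<le> measure \<mu> A" if \<xi>: "\<xi> \<in> Omega M" for \<xi>
  proof -
    have "c * ?f \<xi> = (\<integral>\<sigma>. c * ?f \<xi> \<partial>\<mu>)"
      by (simp add: \<mu>.prob_space)
    also have "\<dots> \<le> (\<integral>\<sigma>. ?f \<sigma> \<partial>\<mu>)"
      using lower \<xi> GibbsD(3)[OF \<mu>] int_\<mu> by (intro integral_mono) auto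
    finally show ?thesis
      using GibbsD(4)[OF \<mu> L A] by simp
  qed
  have "c * measure \<nu> A = (\<integral>\<sigma>. c * ?f \<sigma> \<partial>\<nu>)"
    using GibbsD(4)[OF \<nu> L A] by simp
  also have "\<dots> \<le> (\<integral>\<sigma>. measure \<mu> A \<partial>\<nu>)"
    using below_\<mu> GibbsD(3)[OF \<nu>] int_\<nu> by (intro integral_mono) auto
  also have "\<dots> = measure \<mu> A"
    by (simp add: \<nu>.prob_space)
  finally show ?thesis .
qed

text \<open>The residual of a decomposition mu = c*nu + rho of specified measures, normalised
  to total mass one, is again specified by gamma: the specification identities are
  linear in the measure.\<close>
lemma gibbs_residual:
  assumes P: "POS M \<gamma>" and \<mu>: "\<mu> \<in> Gibbs M \<gamma>" and \<nu>: "\<nu> \<in> Gibbs M \<gamma>"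
    and c: "0 \<le> c" "c < 1"
    and \<rho>: "finite_measure \<rho>" "sets \<rho> = sets (cfg M)"
    and decomposition: "\<And>A. A \<in> sets (cfg M) \<Longrightarrow> measure \<mu> A = c * measure \<nu> A + measure \<rho> A"
  shows "scale_measure (ennreal (1 / (1 - c))) \<rho> \<in> Gibbs M \<gamma>"
proof -
  let ?\<mu>' = "scale_measure (ennreal (1 / (1 - c))) \<rho>"
  interpret \<mu>: prob_space \<mu> using GibbsD(1)[OF \<mu>] .
  interpret \<nu>: prob_space \<nu> using GibbsD(1)[OF \<nu>] .
  interpret \<rho>: finite_measure \<rho> by (rule \<rho>(1))
  have sets_\<mu>': "sets ?\<mu>' = sets (cfg M)" and space_\<rho>: "space \<rho> = Omega M"
    using \<rho>(2) sets_eq_imp_space_eq by auto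
  have measure_\<mu>': "measure ?\<mu>' A = 1 / (1 - c) * measure \<rho> A" for A
    using c by simp
  have "measure \<rho> (Omega M) = 1 - c"
    using decomposition[of "Omega M"] \<mu>.prob_space \<nu>.prob_space GibbsD(3)[OF \<mu>] GibbsD(3)[OF \<nu>]
    by simp
  then have "emeasure ?\<mu>' (space ?\<mu>') = 1"
    using c space_\<rho> by (simp add: \<rho>.emeasure_eq_measure space_scale_measure ennreal_mult[symmetric])
  then have prob_\<mu>': "prob_space ?\<mu>'"
    by (rule prob_spaceI)
  have fin_\<mu>': "finite_measure ?\<mu>'"
    using prob_\<mu>' prob_space.finite_measure by blast
  have "(\<integral>\<sigma>. measure (\<gamma> L \<sigma>) A \<partial>?\<mu>') = measure ?\<mu>' A"
    if L: "time_box L" and A: "A \<in> Fsig M (UNIV - future_set L)" for L A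
  proof -
    let ?f = "\<lambda>\<sigma>. measure (\<gamma> L \<sigma>) A"
    have A_sets: "A \<in> sets (cfg M)"
      using A Fsig_subset_sets by blast
    have int: "integrable N ?f" if "finite_measure N" "sets N = sets (cfg M)" for N
      using kernel_integrable[OF P L A that] .
    have nonneg: "0 \<le> ?f \<sigma>" if "\<sigma> \<in> Omega M" for \<sigma>
      using kernel_bounds(1)[OF P L that] .
    have "measure \<mu> A = c * measure \<nu> A + (\<integral>\<sigma>. ?f \<sigma> \<partial>\<rho>)"
      using GibbsD(4)[OF \<mu> L A] GibbsD(4)[OF \<nu> L A] integral_mixture[of \<nu> \<mu> \<rho> c 1 ?f]
      using GibbsD(2,3)[OF \<mu>] GibbsD(2)[OF \<nu>] \<rho>(2) c decomposition
        int \<mu>.finite_measure_axioms \<nu>.finite_measure_axioms \<rho>(1) nonneg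
      by simp
    then have integral_\<rho>: "(\<integral>\<sigma>. ?f \<sigma> \<partial>\<rho>) = measure \<rho> A"
      using decomposition[OF A_sets] by simp
    have "(\<integral>\<sigma>. ?f \<sigma> \<partial>?\<mu>') = 1 / (1 - c) * (\<integral>\<sigma>. ?f \<sigma> \<partial>\<rho>) + 0 * (\<integral>\<sigma>. ?f \<sigma> \<partial>\<rho>)"
      using c sets_\<mu>' \<rho> fin_\<mu>' int space_\<rho> nonneg
      by (intro integral_mixture) (auto simp: measure_\<mu>' space_scale_measure)
    then show ?thesis
      using integral_\<rho> measure_\<mu>' by simp
  qed
  then show ?thesis
    unfolding Gibbs_def using prob_\<mu>' sets_\<mu>' by blast
qed

lemma gibbs_decomposition:
  assumes P: "POS M \<gamma>" and \<mu>: "\<mu> \<in> Gibbs M \<gamma>" and \<nu>: "\<nu> \<in> Gibbs M \<gamma>"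
    and c: "0 \<le> c" "c < 1" and lower: "cylinder_lower_bound M \<gamma> c"
  obtains \<mu>' where "\<mu>' \<in> Gibbs M \<gamma>"
    "\<And>A. A \<in> sets (cfg M) \<Longrightarrow> measure \<mu> A = c * measure \<nu> A + (1 - c) * measure \<mu>' A"
proof -
  have "c * measure \<nu> C \<le> measure \<mu> C" if C: "cylinder M C" for C
  proof -
    obtain L where "time_box L" "C \<in> Fsig M (UNIV - future_set L)"
      "\<forall>\<omega>\<in>Omega M. \<forall>\<xi>\<in>Omega M. measure (\<gamma> L \<omega>) C \<ge> c * measure (\<gamma> L \<xi>) C"
      using lower C unfolding cylinder_lower_bound_def by blast
    then show ?thesis
      by (intro gibbs_event_domination[OF P \<mu> \<nu>]) auto
  qed
  moreover have "sets \<mu> = sigma_sets (Omega M) {A. cylinder M A}"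
    "sets \<nu> = sigma_sets (Omega M) {A. cylinder M A}"
    using GibbsD(2)[OF \<mu>] GibbsD(2)[OF \<nu>] by (simp_all add: sigma_sets_cylinders)
  moreover have "finite_measure \<mu>" "finite_measure \<nu>"
    using GibbsD(1)[OF \<mu>] GibbsD(1)[OF \<nu>] prob_space.finite_measure by blast+
  ultimately obtain \<rho> where \<rho>: "finite_measure \<rho>" "sets \<rho> = sets (cfg M)"
    and decomposition: "\<And>A. A \<in> sets (cfg M) \<Longrightarrow> measure \<mu> A = c * measure \<nu> A + measure \<rho> A"
    using dominated_decomposition[OF cylinder_algebra] unfolding sigma_sets_cylinders by blast
  show thesis
  proof (rule that)
    show "scale_measure (ennreal (1 / (1 - c))) \<rho> \<in> Gibbs M \<gamma>"
      by (rule gibbs_residual[OF P \<mu> \<nu> c \<rho> decomposition])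
    show "measure \<mu> A = c * measure \<nu> A +
        (1 - c) * measure (scale_measure (ennreal (1 / (1 - c))) \<rho>) A" if "A \<in> sets (cfg M)" for A
      using decomposition[OF that] c by simp
  qed
qed

lemma gibbs_distance_bound:
  fixes \<gamma> :: "'s::order set \<Rightarrow> ('s \<Rightarrow> 'e) \<Rightarrow> ('s \<Rightarrow> 'e) measure"
  assumes P: "POS M \<gamma>" and c: "0 \<le> c" "c < 1" and lower: "cylinder_lower_bound M \<gamma> c"
  shows "\<forall>\<mu>\<in>Gibbs M \<gamma>. \<forall>\<nu>\<in>Gibbs M \<gamma>. \<forall>A\<in>sets (cfg M).
           \<bar>measure \<mu> A - measure \<nu> A\<bar> \<le> (1 - c) ^ n"
proof (induction n)
  case 0
  show ?case
  proof (intro ballI)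
    fix \<mu> \<nu> :: "('s \<Rightarrow> 'e) measure" and A :: "('s \<Rightarrow> 'e) set" assume "\<mu> \<in> Gibbs M \<gamma>" "\<nu> \<in> Gibbs M \<gamma>"
    then have "measure \<mu> A \<le> 1" "measure \<nu> A \<le> 1"
      using GibbsD(1) prob_space.prob_le_1 by blast+
    then show "\<bar>measure \<mu> A - measure \<nu> A\<bar> \<le> (1 - c) ^ 0"
      unfolding power_0 abs_le_iff using measure_nonneg[of \<mu> A] measure_nonneg[of \<nu> A] by linarith
  qed
next
  case (Suc n)
  show ?case
  proof (intro ballI)
    fix \<mu> \<nu> :: "('s \<Rightarrow> 'e) measure" and A :: "('s \<Rightarrow> 'e) set" assume \<mu>: "\<mu> \<in> Gibbs M \<gamma>" and \<nu>: "\<nu> \<in> Gibbs M \<gamma>" and A: "A \<in> sets (cfg M)"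
    obtain \<mu>' where \<mu>': "\<mu>' \<in> Gibbs M \<gamma>"
      "measure \<mu> A = c * measure \<nu> A + (1 - c) * measure \<mu>' A"
      using gibbs_decomposition[OF P \<mu> \<nu> c lower] A by metis
    then have "measure \<mu> A - measure \<nu> A = (1 - c) * (measure \<mu>' A - measure \<nu> A)"
      by (simp add: algebra_simps)
    then have "\<bar>measure \<mu> A - measure \<nu> A\<bar> = (1 - c) * \<bar>measure \<mu>' A - measure \<nu> A\<bar>"
      using c by (simp add: abs_mult)
    also have "\<dots> \<le> (1 - c) * (1 - c) ^ n"
      using Suc.IH \<mu>'(1) \<nu> A c by (intro mult_left_mono) auto
    finally show "\<bar>measure \<mu> A - measure \<nu> A\<bar> \<le> (1 - c) ^ Suc n"
      by simp
  qed
qed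

lemma gibbs_unique:
  assumes P: "POS M \<gamma>" and c: "0 < c" "c < 1" and lower: "cylinder_lower_bound M \<gamma> c"
    and \<mu>: "\<mu> \<in> Gibbs M \<gamma>" and \<nu>: "\<nu> \<in> Gibbs M \<gamma>"
  shows "\<mu> = \<nu>"
proof (rule measure_eqI)
  show "sets \<mu> = sets \<nu>"
    using GibbsD(2)[OF \<mu>] GibbsD(2)[OF \<nu>] by simp
  fix A assume "A \<in> sets \<mu>"
  then have A: "A \<in> sets (cfg M)"
    using GibbsD(2)[OF \<mu>] by simp
  have "(\<lambda>n. (1 - c) ^ n) \<longlonglongrightarrow> 0"
    using c by (intro LIMSEQ_power_zero) auto
  then have "\<bar>measure \<mu> A - measure \<nu> A\<bar> \<le> 0"
    using gibbs_distance_bound[OF P less_imp_le[OF c(1)] c(2) lower] \<mu> \<nu> A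
    by (intro LIMSEQ_le_const) auto
  then show "emeasure \<mu> A = emeasure \<nu> A"
    using finite_measure.emeasure_eq_measure[OF prob_space.finite_measure[OF GibbsD(1)[OF \<mu>]]]
      finite_measure.emeasure_eq_measure[OF prob_space.finite_measure[OF GibbsD(1)[OF \<nu>]]]
    by simp
qed

theorem mainTheorem11:
  fixes M :: "'e measure"
    and \<gamma> :: "'s::order set \<Rightarrow> ('s \<Rightarrow> 'e) \<Rightarrow> ('s \<Rightarrow> 'e) measure"
  assumes "standing_assumptions TYPE('s)"
    and "POS M \<gamma>"
    and "\<exists>c>0. \<forall>A. cylinder M A \<longrightarrow>
           (\<exists>L. time_box L \<and> A \<in> Fsig M (UNIV - future_set L) \<and>
              (\<forall>\<omega>\<in>Omega M. \<forall>\<xi>\<in>Omega M. measure (\<gamma> L \<omega>) A \<ge> c * measure (\<gamma> L \<xi>) A))"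
  shows "\<forall>\<mu>\<in>Gibbs M \<gamma>. \<forall>\<nu>\<in>Gibbs M \<gamma>. \<mu> = \<nu>"
proof -
  obtain c where "c > 0" and lower: "cylinder_lower_bound M \<gamma> c"
    using assms(3) unfolding cylinder_lower_bound_def by blast
  have "cylinder_lower_bound M \<gamma> (min c (1/2))"
    using lower by (rule cylinder_lower_bound_mono) simp
  moreover have "0 < min c (1/2)" "min c (1/2) < (1::real)"
    using \<open>c > 0\<close> by auto
  ultimately show ?thesis
    using gibbs_unique[OF assms(2)] by blast
qed

end
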